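(* Let $G>0$, $w_0>0$ and $\theta\in\mathbb{R}$, and let $g(t)=G\sin(w_0t+\theta)$. For $i=1,2,3,\dots$ let $$x_i(t)=G F_i\sin(w_0t+\phi_i+\theta)+n_i(t),$$ where the triples $(F_i,\phi_i,n_i(\cdot))$ are independent and identically distributed across $i$; for each $i$, the random variables $F_i$, $\phi_i$ and the noise process $n_i(\cdot)$ are mutually independent; $F_i$ is real-valued with $E|F_i|<\infty$; $\phi_i$ is uniformly distributed on $[-\pi,\pi]$; and for each $t$, $n_i(t)$ is integrable with $E[n_i(t)]=0$. For $M\ge 1$ let $X^+_M=\{i\in\{1,\dots,M\}: |\phi_i|\le \pi/2\}$ and let $\overline{X^+_M}$ denote its cardinality. Then there is a constant $c$ (not depending on $t$) such that for every $t$, $$\hat g_M(t)=\frac{1}{\overline{X^+_M}}\sum_{i\in X^+_M}x_i(t)\longrightarrow c\,g(t)\quad\text{almost surely as } M\to\infty$$ (so that $\overline{X^+_M}\to\infty$).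
   Context: Each $x_i$ models the noisy output of a linear time-invariant channel with magnitude response $F_i$ and phase response $\phi_i$ at frequency $w_0$, driven by the common input $g$; the estimator averages only over the channels whose phase lag lies in $[-\pi/2,\pi/2]$. *)

theory Defs
  imports "HOL-Probability.Probability"
begin

definition sig_in :: "real \<Rightarrow> real \<Rightarrow> real \<Rightarrow> real \<Rightarrow> real" where
  "sig_in G w0 \<theta> t = G * sin (w0 * t + \<theta>)"

definition chan_out :: "real \<Rightarrow> real \<Rightarrow> real \<Rightarrow> (nat \<Rightarrow> 'a \<Rightarrow> real) \<Rightarrow> (nat \<Rightarrow> 'a \<Rightarrow> real)
    \<Rightarrow> (nat \<Rightarrow> 'a \<Rightarrow> real \<Rightarrow> real) \<Rightarrow> nat \<Rightarrow> real \<Rightarrow> 'a \<Rightarrow> real" where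
  "chan_out G w0 \<theta> F \<phi> n i t \<omega> = G * F i \<omega> * sin (w0 * t + \<phi> i \<omega> + \<theta>) + n i \<omega> t"

definition Xplus :: "(nat \<Rightarrow> 'a \<Rightarrow> real) \<Rightarrow> nat \<Rightarrow> 'a \<Rightarrow> nat set" where
  "Xplus \<phi> m \<omega> = {i \<in> {1..m}. \<bar>\<phi> i \<omega>\<bar> \<le> pi / 2}"

text \<open>The estimator; division by zero yields 0 in Isabelle (irrelevant for the limit).\<close>
definition g_hat :: "real \<Rightarrow> real \<Rightarrow> real \<Rightarrow> (nat \<Rightarrow> 'a \<Rightarrow> real) \<Rightarrow> (nat \<Rightarrow> 'a \<Rightarrow> real)
    \<Rightarrow> (nat \<Rightarrow> 'a \<Rightarrow> real \<Rightarrow> real) \<Rightarrow> nat \<Rightarrow> real \<Rightarrow> 'a \<Rightarrow> real" where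
  "g_hat G w0 \<theta> F \<phi> n m t \<omega> =
     (\<Sum>i\<in>Xplus \<phi> m \<omega>. chan_out G w0 \<theta> F \<phi> n i t \<omega>) / real (card (Xplus \<phi> m \<omega>))"

abbreviation path_space :: "(real \<Rightarrow> real) measure" where
  "path_space \<equiv> PiM UNIV (\<lambda>_::real. borel)"

abbreviation triple_space :: "(real \<times> real \<times> (real \<Rightarrow> real)) measure" where
  "triple_space \<equiv> borel \<Otimes>\<^sub>M borel \<Otimes>\<^sub>M path_space"

text \<open>Events generated by a random variable X : M -> N (as in the library's indep_vars_def2).
  Used to state mutual independence of random variables of different types.\<close>
definition rv_events :: "'a measure \<Rightarrow> 'b measure \<Rightarrow> ('a \<Rightarrow> 'b) \<Rightarrow> 'a set set" where
  "rv_events M N X = {X -` A \<inter> space M | A. A \<in> sets N}"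

end

theory Submission
  imports Defs
begin

text \<open>
  Both the number of selected channels and their summed output are sums over \<open>i \<le> M\<close> of i.i.d.
  integrable functions of the channel triples \<open>(F\<^sub>i, \<phi>\<^sub>i, n\<^sub>i)\<close>: the indicator
  \<open>1[\<bar>\<phi>\<^sub>i\<bar> \<le> \<pi>/2]\<close> and \<open>1[\<bar>\<phi>\<^sub>i\<bar> \<le> \<pi>/2] x\<^sub>i(t)\<close>. By the strong law of large numbers
  their averages converge almost surely, to \<open>1/2\<close> and to \<open>E[F] E[1[\<bar>\<phi>\<bar> \<le> \<pi>/2] cos \<phi>] g(t)\<close>:
  expanding \<open>sin (w\<^sub>0 t + \<theta> + \<phi>)\<close>, the noise term vanishes because \<open>n(t)\<close> is centred and independent
  of \<open>\<phi>\<close>, and \<open>E[1[\<bar>\<phi>\<bar> \<le> \<pi>/2] sin \<phi>] = 0\<close> because \<open>\<phi>\<close> is symmetric. The estimator is the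
  ratio of the two averages, so it tends to \<open>c g(t)\<close> with \<open>c = 2 E[F] E[1[\<bar>\<phi>\<bar> \<le> \<pi>/2] cos \<phi>]\<close>,
  and the number of selected channels grows linearly.

  The strong law is proved by Etemadi's argument. For nonnegative \<open>X\<^sub>i\<close>, truncate \<open>X\<^sub>i\<close> at level
  \<open>i + 1\<close>; by Borel--Cantelli and \<open>\<Sum>\<^sub>i P(X > i + 1) \<le> E X\<close> this changes only finitely many terms.
  Chebyshev's inequality, the bound \<open>\<Sum>\<^sub>j Var(Y\<^sub>j)/(j+1)\<^sup>2 \<le> 2 E X\<close> and Borel--Cantelli give
  convergence of the truncated averages along every subsequence \<open>\<lfloor>\<alpha>\<^sup>n\<rfloor>\<close>, \<open>\<alpha> > 1\<close>, and since the
  partial sums are nondecreasing this extends to the whole sequence as \<open>\<alpha> \<rightarrow> 1\<close>. A general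
  integrable sequence is split into its positive and negative parts.
\<close>

section \<open>Averages of real sequences\<close>

lemma Cesaro_tendsto:
  fixes a :: "nat \<Rightarrow> real"
  assumes "a \<longlonglongrightarrow> \<mu>"
  shows "(\<lambda>k. (\<Sum>j<k. a j) / real k) \<longlonglongrightarrow> \<mu>"
proof -
  define b where "b j = a j - \<mu>" for j
  have b0: "b \<longlonglongrightarrow> 0" using assms unfolding b_def by (simp add: LIM_zero)
  have "(\<lambda>k. (\<Sum>j<k. b j) / real k) \<longlonglongrightarrow> 0"
  proof (rule LIMSEQ_I)
    fix r :: real assume r: "r > 0"
    obtain N where N: "\<And>j. j \<ge> N \<Longrightarrow> norm (b j) < r / 2"
      using LIMSEQ_D[OF b0, of "r/2"] r by auto
    define B where "B = (\<Sum>j<N. \<bar>b j\<bar>)"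
    obtain K :: nat where K: "K > 2 * B / r" using reals_Archimedean2 by blast
    show "\<exists>no. \<forall>k\<ge>no. norm ((\<Sum>j<k. b j) / real k - 0) < r"
    proof (intro exI allI impI)
      fix k assume k: "k \<ge> max (Suc N) (Suc K)"
      then have kN: "k \<ge> N" and kp: "real k > 0" and kK: "real k > 2 * B / r" using K by auto
      have "\<bar>\<Sum>j<k. b j\<bar> \<le> (\<Sum>j<k. \<bar>b j\<bar>)" by (rule sum_abs)
      also have "\<dots> = B + (\<Sum>j\<in>{N..<k}. \<bar>b j\<bar>)"
        using kN unfolding B_def by (metis lessThan_atLeast0 sum.atLeastLessThan_concat zero_le)
      also have "(\<Sum>j\<in>{N..<k}. \<bar>b j\<bar>) \<le> (\<Sum>j\<in>{N..<k}. r / 2)"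
        using N by (intro sum_mono) (auto intro: less_imp_le)
      also have "\<dots> \<le> real k * (r / 2)" using r by simp
      finally have "\<bar>\<Sum>j<k. b j\<bar> \<le> B + real k * (r / 2)" by simp
      moreover have "B < real k * (r / 2)" using kK r by (simp add: field_simps)
      ultimately have "\<bar>\<Sum>j<k. b j\<bar> < real k * r" by linarith
      then show "norm ((\<Sum>j<k. b j) / real k - 0) < r" using kp
        by (simp add: field_simps)
    qed
  qed
  moreover have "(\<Sum>j<k. a j) / real k = (\<Sum>j<k. b j) / real k + (if k = 0 then 0 else \<mu>)" for k
    unfolding b_def by (simp add: sum_subtractf field_simps)
  moreover have "(\<lambda>k. if k = 0 then 0 else \<mu>) \<longlonglongrightarrow> \<mu>"
    by (rule LIMSEQ_offset[where k=1]) simp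
  ultimately show ?thesis
    using tendsto_add[of "\<lambda>k. (\<Sum>j<k. b j) / real k" 0] by simp
qed

lemma averages_tendsto_eventually_eq:
  fixes a b :: "nat \<Rightarrow> real"
  assumes "(\<lambda>k. (\<Sum>j<k. a j) / real k) \<longlonglongrightarrow> \<mu>"
    and "eventually (\<lambda>j. a j = b j) sequentially"
  shows "(\<lambda>k. (\<Sum>j<k. b j) / real k) \<longlonglongrightarrow> \<mu>"
proof -
  obtain N where N: "\<And>j. j \<ge> N \<Longrightarrow> a j = b j"
    using assms(2) by (auto simp: eventually_sequentially)
  define C where "C = (\<Sum>j<N. b j - a j)"
  have "(\<Sum>j<k. b j) = (\<Sum>j<k. a j) + C" if "k \<ge> N" for k
  proof -
    have "(\<Sum>j<k. b j - a j) = C"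
      unfolding C_def using that N by (intro sum.mono_neutral_right) auto
    then show ?thesis by (simp add: sum_subtractf)
  qed
  then have "eventually (\<lambda>k. (\<Sum>j<k. a j) / real k + C / real k = (\<Sum>j<k. b j) / real k) sequentially"
    unfolding eventually_sequentially by (intro exI[of _ N]) (simp add: add_divide_distrib)
  moreover have "(\<lambda>k. (\<Sum>j<k. a j) / real k + C / real k) \<longlonglongrightarrow> \<mu> + 0"
    by (intro tendsto_add assms(1) lim_const_over_n)
  ultimately show ?thesis by (simp add: Lim_transform_eventually)
qed

lemma sum_inverse_squares_above_le:
  fixes x :: real assumes "x > 0"
  shows "(\<Sum>j<K. if x \<le> real (Suc j) then 1 / (real (Suc j))\<^sup>2 else 0)
         \<le> (if x \<le> real K then 2 / x - 2 / real (Suc K) else 0)"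
proof (induction K)
  case 0 then show ?case using assms by simp
next
  case (Suc K)
  have telescope: "1 / (real (Suc K))\<^sup>2 \<le> 2 / real (Suc K) - 2 / real (Suc (Suc K))"
  proof -
    have "2 / real (Suc K) - 2 / real (Suc (Suc K)) = 2 / ((real K + 1) * (real K + 2))"
      by (simp add: field_simps)
    moreover have "1 / (real (Suc K))\<^sup>2 = 1 / ((real K + 1) * (real K + 1))"
      by (simp add: power2_eq_square algebra_simps)
    moreover have "1 / ((real K + 1) * (real K + 1)) \<le> 2 / ((real K + 1) * (real K + 2))"
      by (simp add: divide_simps)
    ultimately show ?thesis by simp
  qed
  show ?case
  proof (cases "x \<le> real K")
    case True
    then show ?thesis using Suc telescope by simp
  next
    case False
    moreover have "2 / real (Suc K) \<le> 2 / x" if "x \<le> real (Suc K)"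
      using assms that by (simp add: frac_le)
    ultimately show ?thesis using Suc telescope by auto
  qed
qed

(* For the truncations Y\<^sub>j of X at level j + 1 this is, pointwise, \<Sum>\<^sub>j E[Y\<^sub>j\<^sup>2]/(j+1)\<^sup>2 \<le> 2 E X. *)
lemma sum_squares_over_squares_above_le:
  fixes x :: real assumes "x \<ge> 0"
  shows "(\<Sum>j<K. if x \<le> real (Suc j) then x\<^sup>2 / (real (Suc j))\<^sup>2 else 0) \<le> 2 * x"
proof (cases "x = 0")
  case False
  then have x: "x > 0" using assms by simp
  have "(if x \<le> real K then 2 / x - 2 / real (Suc K) else 0) \<le> 2 / x" using x by simp
  with sum_inverse_squares_above_le[OF x, of K]
  have "(\<Sum>j<K. if x \<le> real (Suc j) then 1 / (real (Suc j))\<^sup>2 else 0) \<le> 2 / x"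
    by linarith
  then have "x\<^sup>2 * (\<Sum>j<K. if x \<le> real (Suc j) then 1 / (real (Suc j))\<^sup>2 else 0) \<le> x\<^sup>2 * (2 / x)"
    by (rule mult_left_mono) simp
  also have "x\<^sup>2 * (\<Sum>j<K. if x \<le> real (Suc j) then 1 / (real (Suc j))\<^sup>2 else 0)
      = (\<Sum>j<K. if x \<le> real (Suc j) then x\<^sup>2 / (real (Suc j))\<^sup>2 else 0)"
    by (subst sum_distrib_left) (auto intro!: sum.cong)
  also have "x\<^sup>2 * (2 / x) = 2 * x" using x by (simp add: power2_eq_square)
  finally show ?thesis .
qed simp

lemma sum_geometric_below_le:
  fixes \<beta> z :: real assumes "0 < \<beta>" "\<beta> < 1" "z > 0"
  shows "(\<Sum>n<N. if \<beta> ^ n \<le> z then \<beta> ^ n else 0) \<le> max 0 (z - \<beta> ^ N) / (1 - \<beta>)"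
proof (induction N)
  case 0 then show ?case using assms by (simp add: divide_nonneg_pos)
next
  case (Suc N)
  have decr: "\<beta> ^ Suc N \<le> \<beta> ^ N"
    using assms by (simp add: power_decreasing mult_le_cancel_right1 less_imp_le)
  show ?case
  proof (cases "\<beta> ^ N \<le> z")
    case True
    have "(\<Sum>n<Suc N. if \<beta> ^ n \<le> z then \<beta> ^ n else 0) \<le> max 0 (z - \<beta> ^ N) / (1 - \<beta>) + \<beta> ^ N"
      using Suc True by simp
    also have "\<dots> = (z - \<beta> ^ Suc N) / (1 - \<beta>)" using True assms
      by (simp add: field_simps)
    also have "\<dots> \<le> max 0 (z - \<beta> ^ Suc N) / (1 - \<beta>)" using assms
      by (intro divide_right_mono) (auto simp del: power_Suc)
    finally show ?thesis .
  next
    case False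
    have "(\<Sum>n<Suc N. if \<beta> ^ n \<le> z then \<beta> ^ n else 0) \<le> max 0 (z - \<beta> ^ N) / (1 - \<beta>)"
      using Suc False by simp
    also have "\<dots> \<le> max 0 (z - \<beta> ^ Suc N) / (1 - \<beta>)" using assms
      by (intro divide_right_mono max.mono) (use decr in auto)
    finally show ?thesis .
  qed
qed

definition geom_floor :: "real \<Rightarrow> nat \<Rightarrow> nat" where
  "geom_floor \<alpha> n = nat \<lfloor>\<alpha> ^ n\<rfloor>"

lemma geom_floor_bounds:
  assumes "\<alpha> > 1"
  shows geom_floor_ge_1: "geom_floor \<alpha> n \<ge> 1"
    and geom_floor_le: "real (geom_floor \<alpha> n) \<le> \<alpha> ^ n"
    and geom_floor_gt: "\<alpha> ^ n - 1 < real (geom_floor \<alpha> n)"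
    and geom_floor_ge_half: "\<alpha> ^ n / 2 \<le> real (geom_floor \<alpha> n)"
proof -
  have a1: "\<alpha> ^ n \<ge> 1" using assms by simp
  then show "geom_floor \<alpha> n \<ge> 1" "real (geom_floor \<alpha> n) \<le> \<alpha> ^ n"
    "\<alpha> ^ n - 1 < real (geom_floor \<alpha> n)"
    unfolding geom_floor_def by linarith+
  then show "\<alpha> ^ n / 2 \<le> real (geom_floor \<alpha> n)" by linarith
qed

lemma mono_geom_floor: assumes "\<alpha> > 1" shows "mono (geom_floor \<alpha>)"
proof (rule monoI)
  fix m n :: nat assume "m \<le> n"
  then have "\<alpha> ^ m \<le> \<alpha> ^ n" using assms by (simp add: power_increasing)
  then show "geom_floor \<alpha> m \<le> geom_floor \<alpha> n" unfolding geom_floor_def by (intro nat_mono floor_mono)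
qed

lemma filterlim_geom_floor_at_top:
  assumes "\<alpha> > 1" shows "filterlim (geom_floor \<alpha>) at_top sequentially"
proof -
  have "filterlim (\<lambda>n. real (geom_floor \<alpha> n)) at_top sequentially"
    unfolding filterlim_at_top
  proof
    fix Z :: real
    show "eventually (\<lambda>n. Z \<le> real (geom_floor \<alpha> n)) sequentially"
      using Archimedean_eventually_pow[OF assms, of "2 * Z"]
    proof eventually_elim
      case (elim n) then show ?case using geom_floor_ge_half[OF assms, of n] by linarith
    qed
  qed
  then show ?thesis by (simp add: filterlim_sequentially_iff_filterlim_real)
qed

lemma eventually_geom_floor_Suc_le:
  assumes "\<alpha> > 1"
  shows "eventually (\<lambda>n. real (geom_floor \<alpha> (Suc n)) \<le> \<alpha>\<^sup>2 * real (geom_floor \<alpha> n)) sequentially"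
  using Archimedean_eventually_pow[OF assms, of "\<alpha> / (\<alpha> - 1)"]
proof eventually_elim
  case (elim n)
  have "\<alpha> ^ n * (\<alpha> - 1) \<ge> \<alpha>" using elim assms by (simp add: field_simps)
  then have "\<alpha> ^ n - 1 \<ge> \<alpha> ^ n / \<alpha>" using assms by (simp add: field_simps)
  then have "real (geom_floor \<alpha> n) \<ge> \<alpha> ^ n / \<alpha>" using geom_floor_gt[OF assms, of n] by linarith
  then have "\<alpha>\<^sup>2 * real (geom_floor \<alpha> n) \<ge> \<alpha>\<^sup>2 * (\<alpha> ^ n / \<alpha>)"
    by (intro mult_left_mono) auto
  also have "\<alpha>\<^sup>2 * (\<alpha> ^ n / \<alpha>) = \<alpha> ^ Suc n" using assms by (simp add: power2_eq_square)
  finally show ?case using geom_floor_le[OF assms, of "Suc n"] by linarith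
qed

lemma sum_inverse_square_geom_floor_le:
  assumes a: "\<alpha> > 1"
  shows "(\<Sum>n<N. if j < geom_floor \<alpha> n then 1 / (real (geom_floor \<alpha> n))\<^sup>2 else 0)
         \<le> 4 / ((1 - inverse (\<alpha>\<^sup>2)) * (real (Suc j))\<^sup>2)"
proof -
  define \<beta> where "\<beta> = inverse (\<alpha>\<^sup>2)"
  define z where "z = 1 / (real (Suc j))\<^sup>2"
  have \<beta>0: "0 < \<beta>" and \<beta>1: "\<beta> < 1" unfolding \<beta>_def using a
    by (auto simp: inverse_less_1_iff one_less_power)
  have z0: "z > 0" unfolding z_def by simp
  have pw: "\<beta> ^ n = 1 / (\<alpha> ^ n)\<^sup>2" for n
    unfolding \<beta>_def by (simp add: power_inverse divide_inverse flip: power_mult)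
      (simp add: mult.commute power_mult)
  have term_le: "(if j < geom_floor \<alpha> n then 1 / (real (geom_floor \<alpha> n))\<^sup>2 else 0)
          \<le> 4 * (if \<beta> ^ n \<le> z then \<beta> ^ n else 0)" for n
  proof (cases "j < geom_floor \<alpha> n")
    case True
    have an: "\<alpha> ^ n > 0" using a by simp
    have "real (Suc j) \<le> \<alpha> ^ n" using True geom_floor_le[OF a, of n] by linarith
    then have "(real (Suc j))\<^sup>2 \<le> (\<alpha> ^ n)\<^sup>2" by (intro power_mono) simp_all
    then have "\<beta> ^ n \<le> z" unfolding pw z_def using an a
      by (intro divide_left_mono) (auto simp: zero_less_mult_iff)
    moreover have "(\<alpha> ^ n / 2)\<^sup>2 \<le> (real (geom_floor \<alpha> n))\<^sup>2"
      using geom_floor_ge_half[OF a, of n] an by (intro power_mono) linarith+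
    then have "1 / (real (geom_floor \<alpha> n))\<^sup>2 \<le> 1 / (\<alpha> ^ n / 2)\<^sup>2"
      using an a by (intro frac_le) auto
    moreover have "1 / (\<alpha> ^ n / 2)\<^sup>2 = 4 * \<beta> ^ n" unfolding pw by (simp add: power_divide)
    ultimately show ?thesis using True by simp
  qed (use \<beta>0 in simp)
  have "(\<Sum>n<N. if j < geom_floor \<alpha> n then 1 / (real (geom_floor \<alpha> n))\<^sup>2 else 0)
      \<le> 4 * (\<Sum>n<N. if \<beta> ^ n \<le> z then \<beta> ^ n else 0)"
    unfolding sum_distrib_left by (intro sum_mono term_le)
  also have "\<dots> \<le> 4 * (z / (1 - \<beta>))"
  proof -
    have "max 0 (z - \<beta> ^ N) / (1 - \<beta>) \<le> z / (1 - \<beta>)"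
      using \<beta>0 \<beta>1 z0 by (intro divide_right_mono) auto
    with sum_geometric_below_le[OF \<beta>0 \<beta>1 z0, of N] show ?thesis by linarith
  qed
  also have "\<dots> = 4 / ((1 - inverse (\<alpha>\<^sup>2)) * (real (Suc j))\<^sup>2)" unfolding z_def \<beta>_def by simp
  finally show ?thesis .
qed

lemma sum_geom_floor_weighted_le:
  assumes a: "\<alpha> > 1" and v0: "\<And>j. v j \<ge> 0"
    and B: "\<And>K. (\<Sum>j<K. v j / (real (Suc j))\<^sup>2) \<le> B"
  shows "(\<Sum>n<N. (\<Sum>j<geom_floor \<alpha> n. v j) / (real (geom_floor \<alpha> n))\<^sup>2)
         \<le> 4 / (1 - inverse (\<alpha>\<^sup>2)) * B"
proof -
  define K where "K = geom_floor \<alpha> N"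
  define C where "C = 4 / (1 - inverse (\<alpha>\<^sup>2))"
  define w where "w n = 1 / (real (geom_floor \<alpha> n))\<^sup>2" for n
  have C0: "C \<ge> 0" unfolding C_def using a by (auto simp: inverse_less_1_iff one_less_power less_imp_le)
  have "(\<Sum>j<geom_floor \<alpha> n. v j) / (real (geom_floor \<alpha> n))\<^sup>2
      = (\<Sum>j<K. if j < geom_floor \<alpha> n then v j * w n else 0)" if "n < N" for n
  proof -
    have "geom_floor \<alpha> n \<le> K"
      using mono_geom_floor[OF a] that unfolding K_def by (simp add: monoD)
    then have "(\<Sum>j<K. if j < geom_floor \<alpha> n then v j * w n else 0) = (\<Sum>j<geom_floor \<alpha> n. v j * w n)"
      by (subst sum.mono_neutral_right[of "{..<K}" "{..<geom_floor \<alpha> n}"]) auto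
    then show ?thesis by (simp add: w_def sum_divide_distrib)
  qed
  then have "(\<Sum>n<N. (\<Sum>j<geom_floor \<alpha> n. v j) / (real (geom_floor \<alpha> n))\<^sup>2)
      = (\<Sum>n<N. \<Sum>j<K. if j < geom_floor \<alpha> n then v j * w n else 0)"
    by (intro sum.cong) auto
  also have "\<dots> = (\<Sum>j<K. v j * (\<Sum>n<N. if j < geom_floor \<alpha> n then w n else 0))"
    by (subst sum.swap) (simp add: sum_distrib_left if_distrib cong: if_cong)
  also have "\<dots> \<le> (\<Sum>j<K. v j * (C / (real (Suc j))\<^sup>2))"
  proof (intro sum_mono mult_left_mono v0)
    fix j
    show "(\<Sum>n<N. if j < geom_floor \<alpha> n then w n else 0) \<le> C / (real (Suc j))\<^sup>2"
      using sum_inverse_square_geom_floor_le[OF a, where N=N and j=j] unfolding w_def C_def by simp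
  qed
  also have "\<dots> = C * (\<Sum>j<K. v j / (real (Suc j))\<^sup>2)" by (simp add: sum_distrib_left ac_simps)
  also have "\<dots> \<le> C * B" using B C0 by (intro mult_left_mono) auto
  finally show ?thesis unfolding C_def .
qed

lemma ex_index_between_consecutive:
  fixes k :: "nat \<Rightarrow> nat"
  assumes "filterlim k at_top sequentially" "k N \<le> m"
  shows "\<exists>n\<ge>N. k n \<le> m \<and> m < k (Suc n)"
proof -
  have "eventually (\<lambda>n. Suc m \<le> k n) sequentially"
    using assms(1) by (simp add: filterlim_at_top)
  then obtain j where "m < k (N + j)"
    by (metis Suc_le_lessD eventually_sequentially le_add2)
  with assms(2) obtain i where "\<forall>l\<le>i. \<not> m < k (N + l)" "m < k (N + (i + 1))"
    using ex_least_nat_less[of "\<lambda>i. m < k (N + i)"] by auto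
  then show ?thesis by (intro exI[of _ "N + i"]) auto
qed

lemma abs_ratio_sub_le_if_bracketed:
  fixes S m \<mu> \<delta> c :: real
  assumes up: "S \<le> (\<mu> + \<delta>) * c * m" and low: "(\<mu> - \<delta>) * m \<le> c * S"
    and m: "m > 0" and c: "c \<ge> 1" and \<mu>: "\<mu> \<ge> 0" and \<delta>: "\<delta> > 0"
  shows "\<bar>S / m - \<mu>\<bar> \<le> \<delta> + (\<mu> + \<delta>) * (c - 1)"
proof -
  have "S / m - \<mu> \<le> \<delta> + (\<mu> + \<delta>) * (c - 1)"
    using up m by (simp add: field_simps)
  moreover have "\<mu> - S / m \<le> \<delta> + (\<mu> + \<delta>) * (c - 1)"
  proof -
    have "(\<mu> - \<delta>) / c \<le> S / m" using low m c by (simp add: field_simps)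
    moreover have "\<mu> - (\<mu> - \<delta>) / c = (\<mu> * (c - 1) + \<delta>) / c" using c by (simp add: field_simps)
    moreover have "(\<mu> * (c - 1) + \<delta>) / c \<le> \<mu> * (c - 1) + \<delta>"
      using divide_left_mono[of 1 c "\<mu> * (c - 1) + \<delta>"] c \<mu> \<delta> by simp
    moreover have "\<mu> * (c - 1) \<le> (\<mu> + \<delta>) * (c - 1)" using c \<delta> by (intro mult_right_mono) auto
    ultimately show ?thesis by linarith
  qed
  ultimately show ?thesis by linarith
qed

lemma mono_average_near_if_subseq_averages_tendsto:
  fixes S :: "nat \<Rightarrow> real" and k :: "nat \<Rightarrow> nat"
  assumes S_mono: "mono S" and S_nonneg: "\<And>m. S m \<ge> 0"
    and k_mono: "mono k" and k_pos: "\<And>n. k n \<ge> 1" and k_top: "filterlim k at_top sequentially"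
    and k_ratio: "eventually (\<lambda>n. real (k (Suc n)) \<le> c * real (k n)) sequentially"
    and c: "c \<ge> 1"
    and lim: "(\<lambda>n. S (k n) / real (k n)) \<longlonglongrightarrow> \<mu>"
    and \<delta>: "\<delta> > 0"
  shows "eventually (\<lambda>m. \<bar>S m / real m - \<mu>\<bar> \<le> \<delta> + (\<mu> + \<delta>) * (c - 1)) sequentially"
proof -
  have "eventually (\<lambda>n. \<bar>S (k n) / real (k n) - \<mu>\<bar> < \<delta>) sequentially"
    using lim \<delta> by (auto simp: tendsto_iff dist_real_def)
  with k_ratio have "eventually (\<lambda>n.
      \<bar>S (k n) / real (k n) - \<mu>\<bar> < \<delta> \<and> real (k (Suc n)) \<le> c * real (k n)) sequentially"
    by eventually_elim simp
  then obtain N0 where N0: "\<And>n. n \<ge> N0 \<Longrightarrow>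
      \<bar>S (k n) / real (k n) - \<mu>\<bar> < \<delta> \<and> real (k (Suc n)) \<le> c * real (k n)"
    by (auto simp: eventually_sequentially)
  have \<mu>: "\<mu> \<ge> 0"
    by (rule tendsto_lowerbound[OF lim]) (auto intro!: always_eventually divide_nonneg_nonneg S_nonneg)
  have near: "(\<mu> - \<delta>) * real (k n) \<le> S (k n) \<and> S (k n) \<le> (\<mu> + \<delta>) * real (k n)" if "n \<ge> N0" for n
    using N0[OF that] k_pos[of n] by (auto simp: abs_less_iff field_simps)
  show ?thesis unfolding eventually_sequentially
  proof (intro exI allI impI)
    fix m assume m: "m \<ge> k N0"
    from ex_index_between_consecutive[OF k_top m]
    obtain n where n: "n \<ge> N0" and kn: "k n \<le> m" and kn1: "m < k (Suc n)" by blast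
    from N0[OF n] have ratio: "real (k (Suc n)) \<le> c * real (k n)" by simp
    have up: "S m \<le> (\<mu> + \<delta>) * c * real m"
    proof -
      have "S m \<le> S (k (Suc n))" using S_mono kn1 by (simp add: monoD)
      also have "\<dots> \<le> (\<mu> + \<delta>) * real (k (Suc n))" using near[of "Suc n"] n by simp
      also have "\<dots> \<le> (\<mu> + \<delta>) * (c * real (k n))" using ratio \<mu> \<delta> by (intro mult_left_mono) auto
      also have "\<dots> \<le> (\<mu> + \<delta>) * (c * real m)" using kn \<mu> \<delta> c by (intro mult_left_mono) auto
      finally show ?thesis by (simp add: mult.assoc)
    qed
    have low: "(\<mu> - \<delta>) * real m \<le> c * S m"
    proof (cases "\<mu> - \<delta> \<ge> 0")
      case True
      have "(\<mu> - \<delta>) * real m \<le> (\<mu> - \<delta>) * (c * real (k n))"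
        using kn1 ratio True by (intro mult_left_mono) auto
      also have "\<dots> = c * ((\<mu> - \<delta>) * real (k n))" by simp
      also have "\<dots> \<le> c * S m"
        using near[OF n] S_mono kn c by (intro mult_left_mono) (auto dest: monoD)
      finally show ?thesis .
    next
      case False
      then have "(\<mu> - \<delta>) * real m \<le> 0" by (intro mult_nonpos_nonneg) auto
      also have "0 \<le> c * S m" using c S_nonneg[of m] by simp
      finally show ?thesis .
    qed
    have "real m > 0" using m k_pos[of N0] by simp
    with up low show "\<bar>S m / real m - \<mu>\<bar> \<le> \<delta> + (\<mu> + \<delta>) * (c - 1)"
      using c \<mu> \<delta> by (intro abs_ratio_sub_le_if_bracketed) auto
  qed
qed

lemma mono_averages_tendsto_if_geom_floor_averages_tendsto:
  fixes S :: "nat \<Rightarrow> real" and \<alpha> :: "nat \<Rightarrow> real"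
  assumes S_mono: "mono S" and S_nonneg: "\<And>m. S m \<ge> 0"
    and \<alpha>: "\<And>r. \<alpha> r > 1" "\<alpha> \<longlonglongrightarrow> 1"
    and lim: "\<And>r. (\<lambda>n. S (geom_floor (\<alpha> r) n) / real (geom_floor (\<alpha> r) n)) \<longlonglongrightarrow> \<mu>"
  shows "(\<lambda>m. S m / real m) \<longlonglongrightarrow> \<mu>"
proof (rule LIMSEQ_I)
  fix \<epsilon> :: real assume \<epsilon>: "\<epsilon> > 0"
  have "(\<lambda>r. (\<mu> + \<epsilon> / 2) * ((\<alpha> r)\<^sup>2 - 1)) \<longlonglongrightarrow> (\<mu> + \<epsilon> / 2) * (1\<^sup>2 - 1)"
    by (intro tendsto_mult tendsto_const tendsto_diff tendsto_power \<alpha>(2))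
  then have "eventually (\<lambda>r. (\<mu> + \<epsilon> / 2) * ((\<alpha> r)\<^sup>2 - 1) < \<epsilon> / 2) sequentially"
    by (rule order_tendstoD(2)) (use \<epsilon> in simp)
  then obtain r where r: "(\<mu> + \<epsilon> / 2) * ((\<alpha> r)\<^sup>2 - 1) < \<epsilon> / 2"
    by (auto simp: eventually_sequentially)
  have "1 \<le> (\<alpha> r)\<^sup>2" using \<alpha>(1)[of r] by (simp add: one_le_power)
  with \<alpha>(1)[of r] \<epsilon>
  have "eventually (\<lambda>m. \<bar>S m / real m - \<mu>\<bar> \<le> \<epsilon> / 2 + (\<mu> + \<epsilon> / 2) * ((\<alpha> r)\<^sup>2 - 1)) sequentially"
    by (intro mono_average_near_if_subseq_averages_tendsto[OF S_mono S_nonneg mono_geom_floor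
        geom_floor_ge_1 filterlim_geom_floor_at_top eventually_geom_floor_Suc_le _ lim]) simp_all
  then obtain N where N: "\<And>m. m \<ge> N \<Longrightarrow>
      \<bar>S m / real m - \<mu>\<bar> \<le> \<epsilon> / 2 + (\<mu> + \<epsilon> / 2) * ((\<alpha> r)\<^sup>2 - 1)"
    by (auto simp: eventually_sequentially)
  show "\<exists>no. \<forall>m\<ge>no. norm (S m / real m - \<mu>) < \<epsilon>"
  proof (intro exI allI impI)
    fix m assume "m \<ge> N"
    from N[OF this] r show "norm (S m / real m - \<mu>) < \<epsilon>" by simp
  qed
qed

lemma sum_indicator_Suc_less_le:
  fixes x :: real assumes "x \<ge> 0"
  shows "(\<Sum>i<N. if real (Suc i) < x then 1 else 0) \<le> x"
proof -
  have "(\<Sum>i<N. if real (Suc i) < x then 1 else 0) \<le> x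
      \<and> (\<Sum>i<N. if real (Suc i) < x then 1 else 0 :: real) \<le> real N"
    by (induction N) (use assms in auto)
  then show ?thesis ..
qed

lemma tendsto_zero_if_eventually_less_inverse_Suc:
  fixes f :: "'a \<Rightarrow> real"
  assumes "\<And>q. eventually (\<lambda>x. \<bar>f x\<bar> < inverse (real (Suc q))) F"
  shows "(f \<longlongrightarrow> 0) F"
proof (rule tendstoI)
  fix e :: real assume "e > 0"
  then obtain q where "inverse (real (Suc q)) < e" using reals_Archimedean by blast
  with assms[of q] show "eventually (\<lambda>x. dist (f x) 0 < e) F"
    by (auto elim: eventually_mono)
qed

section \<open>Etemadi's strong law of large numbers\<close>

lemma distr_comp_eq:
  assumes "distr M N X = distr M N Y" "X \<in> M \<rightarrow>\<^sub>M N" "Y \<in> M \<rightarrow>\<^sub>M N" "f \<in> N \<rightarrow>\<^sub>M L"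
  shows "distr M L (\<lambda>\<omega>. f (X \<omega>)) = distr M L (\<lambda>\<omega>. f (Y \<omega>))"
  using distr_distr[of f N L X M] distr_distr[of f N L Y M] assms by (simp add: comp_def)

context prob_space
begin

lemma indep_sets_reindex:
  assumes ind: "indep_sets F (f ` I)" and inj: "inj_on f I"
  shows "indep_sets (\<lambda>i. F (f i)) I"
  unfolding indep_sets_def
proof (intro conjI ballI allI impI)
  fix i assume "i \<in> I" then show "F (f i) \<subseteq> events" using ind unfolding indep_sets_def by auto
next
  fix J A assume J: "J \<subseteq> I" "J \<noteq> {}" "finite J" and A: "A \<in> Pi J (\<lambda>i. F (f i))"
  have injJ: "inj_on f J" using inj J(1) by (rule inj_on_subset)
  define A' where "A' y = A (the_inv_into J f y)" for y
  have A'f: "A' (f j) = A j" if "j \<in> J" for j unfolding A'_def using the_inv_into_f_f[OF injJ that] by simp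
  have "A' \<in> Pi (f ` J) F" using A A'f by auto
  then have "prob (\<Inter>y\<in>f ` J. A' y) = (\<Prod>y\<in>f ` J. prob (A' y))"
    using ind J unfolding indep_sets_def by (metis finite_imageI image_is_empty image_mono)
  moreover have "(\<Inter>y\<in>f ` J. A' y) = (\<Inter>j\<in>J. A j)" using A'f by auto
  moreover have "(\<Prod>y\<in>f ` J. prob (A' y)) = (\<Prod>j\<in>J. prob (A j))"
    using A'f by (simp add: prod.reindex[OF injJ])
  ultimately show "prob (\<Inter>j\<in>J. A j) = (\<Prod>j\<in>J. prob (A j))" by simp
qed

lemma indep_vars_reindex:
  assumes "indep_vars N X (f ` I)" "inj_on f I"
  shows "indep_vars (\<lambda>i. N (f i)) (\<lambda>i. X (f i)) I"
  using assms indep_sets_reindex[of "\<lambda>i. {X i -` A \<inter> space M |A. A \<in> sets (N i)}" f I]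
  unfolding indep_vars_def2 by auto

lemma indep_vars_expectation_sum_square:
  fixes Y :: "nat \<Rightarrow> 'a \<Rightarrow> real"
  assumes indep: "indep_vars (\<lambda>_. borel) Y UNIV"
    and bounded: "\<And>i \<omega>. \<omega> \<in> space M \<Longrightarrow> \<bar>Y i \<omega>\<bar> \<le> B i"
    and centered: "\<And>i. expectation (Y i) = 0"
  shows "expectation (\<lambda>\<omega>. (\<Sum>j<k. Y j \<omega>)\<^sup>2) = (\<Sum>j<k. expectation (\<lambda>\<omega>. (Y j \<omega>)\<^sup>2))"
proof -
  have [measurable]: "random_variable borel (Y i)" for i using indep unfolding indep_vars_def by auto
  have int_Y: "integrable M (Y i)" for i
    by (rule integrable_const_bound[where B="B i"]) (use bounded in auto)
  have int_prod: "integrable M (\<lambda>\<omega>. Y i \<omega> * Y j \<omega>)" for i j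
  proof (rule integrable_const_bound[where B="B i * B j"])
    show "AE \<omega> in M. norm (Y i \<omega> * Y j \<omega>) \<le> B i * B j"
    proof (rule AE_I2)
      fix \<omega> assume "\<omega> \<in> space M"
      then show "norm (Y i \<omega> * Y j \<omega>) \<le> B i * B j"
        using bounded[of \<omega> i] bounded[of \<omega> j] by (simp add: abs_mult mult_mono)
    qed
  qed simp
  have uncorrelated: "expectation (\<lambda>\<omega>. Y i \<omega> * Y j \<omega>) = 0" if "i \<noteq> j" for i j
  proof -
    have "indep_vars (\<lambda>_. borel) Y {i, j}" by (rule indep_vars_subset[OF indep]) auto
    from indep_vars_lebesgue_integral[OF _ this int_Y]
    have "expectation (\<lambda>\<omega>. \<Prod>l\<in>{i,j}. Y l \<omega>) = (\<Prod>l\<in>{i,j}. expectation (Y l))" by simp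
    then show ?thesis using that centered by simp
  qed
  have "expectation (\<lambda>\<omega>. (\<Sum>j<k. Y j \<omega>)\<^sup>2) = (\<Sum>i<k. \<Sum>j<k. expectation (\<lambda>\<omega>. Y i \<omega> * Y j \<omega>))"
    using int_prod by (simp add: power2_eq_square sum_product Bochner_Integration.integral_sum)
  also have "\<dots> = (\<Sum>i<k. \<Sum>j<k. if i = j then expectation (\<lambda>\<omega>. Y i \<omega> * Y j \<omega>) else 0)"
    by (intro sum.cong refl) (auto simp: uncorrelated)
  also have "\<dots> = (\<Sum>i<k. expectation (\<lambda>\<omega>. (Y i \<omega>)\<^sup>2))"
    by (simp add: power2_eq_square)
  finally show ?thesis .
qed

end

locale iid_real = prob_space +
  fixes X :: "nat \<Rightarrow> 'a \<Rightarrow> real"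
  assumes indep_X: "indep_vars (\<lambda>_. borel) X UNIV"
    and distr_X: "\<And>i. distr M borel (X i) = distr M borel (X 0)"
    and integrable_X0: "integrable M (X 0)"
begin

lemma measurable_X[measurable]: "X i \<in> borel_measurable M"
  using indep_X unfolding indep_vars_def by auto

lemma integral_comp_X:
  fixes g :: "real \<Rightarrow> real"
  assumes "g \<in> borel_measurable borel"
  shows "(\<integral>\<omega>. g (X i \<omega>) \<partial>M) = (\<integral>\<omega>. g (X 0 \<omega>) \<partial>M)"
  using integral_distr[of "X i" M borel g] integral_distr[of "X 0" M borel g] distr_X[of i] assms
  by simp

lemma iid_real_comp:
  assumes "f \<in> borel_measurable borel" "integrable M (\<lambda>\<omega>. f (X 0 \<omega>))"
  shows "iid_real M (\<lambda>i \<omega>. f (X i \<omega>))"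
proof
  show "indep_vars (\<lambda>_. borel) (\<lambda>i \<omega>. f (X i \<omega>)) UNIV"
    using indep_vars_compose2[OF indep_X, of "\<lambda>_. f"] assms(1) by simp
  show "distr M borel (\<lambda>\<omega>. f (X i \<omega>)) = distr M borel (\<lambda>\<omega>. f (X 0 \<omega>))" for i
    using distr_comp_eq[OF distr_X] assms(1) by simp
qed (use assms(2) in simp)

lemma AE_eventually_abs_le_Suc:
  "AE \<omega> in M. eventually (\<lambda>i. \<bar>X i \<omega>\<bar> \<le> real (Suc i)) sequentially"
proof -
  define A where "A i = {\<omega>\<in>space M. real (Suc i) < \<bar>X i \<omega>\<bar>}" for i
  have A_events[measurable]: "A i \<in> events" for i unfolding A_def by measurable
  define ind where "ind i x = (if real (Suc i) < \<bar>x\<bar> then 1 else 0 :: real)" for i x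
  have int_ind: "integrable M (\<lambda>\<omega>. ind i (X 0 \<omega>))" for i
    by (rule integrable_const_bound[where B=1]) (auto simp: ind_def)
  have prob_A: "prob (A i) = (\<integral>\<omega>. ind i (X 0 \<omega>) \<partial>M)" for i
  proof -
    have "prob (A i) = (\<integral>\<omega>. indicator (A i) \<omega> \<partial>M)" by simp
    also have "\<dots> = (\<integral>\<omega>. ind i (X i \<omega>) \<partial>M)"
      by (intro Bochner_Integration.integral_cong) (auto simp: A_def ind_def)
    also have "\<dots> = (\<integral>\<omega>. ind i (X 0 \<omega>) \<partial>M)" by (rule integral_comp_X) (simp add: ind_def)
    finally show ?thesis .
  qed
  have "summable (\<lambda>i. prob (A i))"
  proof (rule summableI_nonneg_bounded)
    fix N
    have "(\<Sum>i<N. prob (A i)) = (\<integral>\<omega>. (\<Sum>i<N. ind i (X 0 \<omega>)) \<partial>M)"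
      using int_ind by (simp add: prob_A)
    also have "\<dots> \<le> (\<integral>\<omega>. \<bar>X 0 \<omega>\<bar> \<partial>M)"
      using int_ind integrable_X0
      by (intro integral_mono) (auto simp: ind_def simp del: of_nat_Suc intro: sum_indicator_Suc_less_le)
    finally show "(\<Sum>i<N. prob (A i)) \<le> (\<integral>\<omega>. \<bar>X 0 \<omega>\<bar> \<partial>M)" .
  qed simp
  then have "AE \<omega> in M. eventually (\<lambda>i. \<omega> \<in> space M - A i) sequentially"
    by (intro borel_cantelli_AE1) (simp_all add: less_top[symmetric])
  then show ?thesis
    by (rule AE_mp) (rule AE_I2, auto elim: eventually_mono simp: A_def)
qed

end

definition truncation :: "nat \<Rightarrow> real \<Rightarrow> real" where
  "truncation i x = (if 0 \<le> x \<and> x \<le> real (Suc i) then x else 0)"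

lemma truncation_measurable[measurable]: "truncation i \<in> borel_measurable borel"
  unfolding truncation_def by measurable

lemma truncation_bounds:
  shows truncation_nonneg: "0 \<le> truncation i x"
    and truncation_le_Suc: "truncation i x \<le> real (Suc i)"
    and truncation_le_abs: "\<bar>truncation i x\<bar> \<le> \<bar>x\<bar>"
  unfolding truncation_def by auto

locale nonneg_iid_real = iid_real +
  assumes nonneg_X: "\<And>i \<omega>. \<omega> \<in> space M \<Longrightarrow> 0 \<le> X i \<omega>"
begin

definition trunc_X :: "nat \<Rightarrow> 'a \<Rightarrow> real" where
  "trunc_X i \<omega> = truncation i (X i \<omega>)"

definition trunc_mean :: "nat \<Rightarrow> real" where
  "trunc_mean i = expectation (trunc_X i)"

lemma measurable_trunc_X[measurable]: "trunc_X i \<in> borel_measurable M"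
  unfolding trunc_X_def by measurable

lemma trunc_X_bounds: "0 \<le> trunc_X i \<omega>" "trunc_X i \<omega> \<le> real (Suc i)"
  unfolding trunc_X_def by (rule truncation_bounds)+

lemma integrable_trunc_X: "integrable M (trunc_X i)"
  by (rule integrable_const_bound[where B="real (Suc i)"]) (use trunc_X_bounds in auto)

lemma trunc_mean_tendsto: "trunc_mean \<longlonglongrightarrow> expectation (X 0)"
proof -
  have "trunc_mean = (\<lambda>i. \<integral>\<omega>. truncation i (X 0 \<omega>) \<partial>M)"
    unfolding trunc_mean_def trunc_X_def by (intro ext integral_comp_X) simp
  moreover have "(\<lambda>i. \<integral>\<omega>. truncation i (X 0 \<omega>) \<partial>M) \<longlonglongrightarrow> expectation (X 0)"
  proof (rule integral_dominated_convergence[where w="\<lambda>\<omega>. \<bar>X 0 \<omega>\<bar>"])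
    show "AE \<omega> in M. (\<lambda>i. truncation i (X 0 \<omega>)) \<longlonglongrightarrow> X 0 \<omega>"
    proof (rule AE_I2)
      fix \<omega> assume "\<omega> \<in> space M"
      moreover obtain N :: nat where "X 0 \<omega> \<le> real N" using real_arch_simple by blast
      ultimately have "\<forall>i\<ge>N. truncation i (X 0 \<omega>) = X 0 \<omega>"
        using nonneg_X by (auto simp: truncation_def)
      then show "(\<lambda>i. truncation i (X 0 \<omega>)) \<longlonglongrightarrow> X 0 \<omega>"
        by (intro tendsto_eventually) (auto simp: eventually_sequentially)
    qed
  qed (use integrable_X0 truncation_le_abs in auto)
  ultimately show ?thesis by simp
qed

lemma sum_trunc_second_moments_le:
  "(\<Sum>j<K. expectation (\<lambda>\<omega>. (trunc_X j \<omega>)\<^sup>2) / (real (Suc j))\<^sup>2) \<le> 2 * expectation (X 0)"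
proof -
  define h where "h j x = (truncation j x)\<^sup>2 / (real (Suc j))\<^sup>2" for j x
  have int_h: "integrable M (\<lambda>\<omega>. h j (X 0 \<omega>))" for j
    by (rule integrable_const_bound[where B=1])
      (auto simp: h_def truncation_def power_divide[symmetric] abs_le_square_iff[symmetric]
        intro!: power_le_one)
  have "(\<Sum>j<K. expectation (\<lambda>\<omega>. (trunc_X j \<omega>)\<^sup>2) / (real (Suc j))\<^sup>2)
      = (\<Sum>j<K. \<integral>\<omega>. h j (X j \<omega>) \<partial>M)"
    unfolding trunc_X_def h_def by simp
  also have "\<dots> = (\<Sum>j<K. \<integral>\<omega>. h j (X 0 \<omega>) \<partial>M)"
    by (intro sum.cong refl integral_comp_X) (simp add: h_def)
  also have "\<dots> = (\<integral>\<omega>. (\<Sum>j<K. h j (X 0 \<omega>)) \<partial>M)"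
    using int_h by simp
  also have "\<dots> \<le> (\<integral>\<omega>. 2 * X 0 \<omega> \<partial>M)"
  proof (rule integral_mono)
    fix \<omega> assume "\<omega> \<in> space M"
    then have X0: "X 0 \<omega> \<ge> 0" by (rule nonneg_X)
    then have "(\<Sum>j<K. h j (X 0 \<omega>))
        = (\<Sum>j<K. if X 0 \<omega> \<le> real (Suc j) then (X 0 \<omega>)\<^sup>2 / (real (Suc j))\<^sup>2 else 0)"
      by (intro sum.cong) (auto simp: h_def truncation_def)
    also have "\<dots> \<le> 2 * X 0 \<omega>" by (rule sum_squares_over_squares_above_le[OF X0])
    finally show "(\<Sum>j<K. h j (X 0 \<omega>)) \<le> 2 * X 0 \<omega>" .
  qed (use int_h integrable_X0 in auto)
  finally show ?thesis by simp
qed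

lemma expectation_centered_trunc_sum_square_le:
  "expectation (\<lambda>\<omega>. (\<Sum>j<k. trunc_X j \<omega> - trunc_mean j)\<^sup>2)
     \<le> (\<Sum>j<k. expectation (\<lambda>\<omega>. (trunc_X j \<omega>)\<^sup>2))"
proof -
  have "indep_vars (\<lambda>_. borel) (\<lambda>j \<omega>. truncation j (X j \<omega>) - trunc_mean j) UNIV"
    by (rule indep_vars_compose2[OF indep_X]) simp
  then have "expectation (\<lambda>\<omega>. (\<Sum>j<k. trunc_X j \<omega> - trunc_mean j)\<^sup>2)
      = (\<Sum>j<k. expectation (\<lambda>\<omega>. (trunc_X j \<omega> - trunc_mean j)\<^sup>2))"
    unfolding trunc_X_def
  proof (rule indep_vars_expectation_sum_square[where B="\<lambda>j. real (Suc j) + \<bar>trunc_mean j\<bar>"])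
    show "\<bar>truncation i (X i \<omega>) - trunc_mean i\<bar> \<le> real (Suc i) + \<bar>trunc_mean i\<bar>" for i \<omega>
      using truncation_bounds[of i "X i \<omega>"] by linarith
    show "expectation (\<lambda>\<omega>. truncation i (X i \<omega>) - trunc_mean i) = 0" for i
      using integrable_trunc_X[of i] unfolding trunc_mean_def trunc_X_def by (simp add: prob_space)
  qed
  also have "\<dots> \<le> (\<Sum>j<k. expectation (\<lambda>\<omega>. (trunc_X j \<omega>)\<^sup>2))"
  proof (rule sum_mono)
    fix j
    have "integrable M (\<lambda>\<omega>. (trunc_X j \<omega>)\<^sup>2)"
      by (rule integrable_const_bound[where B="(real (Suc j))\<^sup>2"])
        (use trunc_X_bounds in \<open>auto simp: abs_le_square_iff[symmetric]\<close>)
    then have "expectation (\<lambda>\<omega>. (trunc_X j \<omega> - trunc_mean j)\<^sup>2)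
        = expectation (\<lambda>\<omega>. (trunc_X j \<omega>)\<^sup>2) - (trunc_mean j)\<^sup>2"
      using variance_eq[of "trunc_X j"] integrable_trunc_X by (simp add: trunc_mean_def)
    then show "expectation (\<lambda>\<omega>. (trunc_X j \<omega> - trunc_mean j)\<^sup>2) \<le> expectation (\<lambda>\<omega>. (trunc_X j \<omega>)\<^sup>2)"
      by simp
  qed
  finally show ?thesis .
qed

end

context nonneg_iid_real
begin

lemma prob_centered_trunc_sum_ge_le:
  assumes k: "k > 0" and \<epsilon>: "\<epsilon> > 0"
  shows "prob {\<omega>\<in>space M. \<epsilon> * real k \<le> \<bar>\<Sum>j<k. trunc_X j \<omega> - trunc_mean j\<bar>}
           \<le> (\<Sum>j<k. expectation (\<lambda>\<omega>. (trunc_X j \<omega>)\<^sup>2)) / (\<epsilon>\<^sup>2 * (real k)\<^sup>2)"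
proof -
  define D where "D \<omega> = (\<Sum>j<k. trunc_X j \<omega> - trunc_mean j)" for \<omega>
  have "integrable M (\<lambda>\<omega>. (D \<omega>)\<^sup>2)"
  proof (rule integrable_const_bound[where B="(\<Sum>j<k. real (Suc j) + \<bar>trunc_mean j\<bar>)\<^sup>2"])
    show "AE \<omega> in M. norm ((D \<omega>)\<^sup>2) \<le> (\<Sum>j<k. real (Suc j) + \<bar>trunc_mean j\<bar>)\<^sup>2"
    proof (rule AE_I2)
      fix \<omega>
      have "\<bar>D \<omega>\<bar> \<le> (\<Sum>j<k. \<bar>trunc_X j \<omega> - trunc_mean j\<bar>)"
        unfolding D_def by (rule sum_abs)
      also have "\<dots> \<le> (\<Sum>j<k. real (Suc j) + \<bar>trunc_mean j\<bar>)"
      proof (rule sum_mono)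
        fix j show "\<bar>trunc_X j \<omega> - trunc_mean j\<bar> \<le> real (Suc j) + \<bar>trunc_mean j\<bar>"
          using trunc_X_bounds[of j \<omega>] by linarith
      qed
      finally show "norm ((D \<omega>)\<^sup>2) \<le> (\<Sum>j<k. real (Suc j) + \<bar>trunc_mean j\<bar>)\<^sup>2"
        by (simp add: abs_le_square_iff[symmetric])
    qed
  qed (simp add: D_def)
  then have "prob {\<omega>\<in>space M. \<epsilon> * real k \<le> \<bar>D \<omega>\<bar>} \<le> expectation (\<lambda>\<omega>. (D \<omega>)\<^sup>2) / (\<epsilon> * real k)\<^sup>2"
    using k \<epsilon> by (intro second_moment_method) (simp_all add: D_def)
  also have "\<dots> \<le> (\<Sum>j<k. expectation (\<lambda>\<omega>. (trunc_X j \<omega>)\<^sup>2)) / (\<epsilon> * real k)\<^sup>2"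
    unfolding D_def by (intro divide_right_mono expectation_centered_trunc_sum_square_le) simp
  finally show ?thesis by (simp add: D_def power_mult_distrib)
qed

lemma AE_centered_trunc_average_geom_floor_small:
  assumes \<alpha>: "\<alpha> > 1" and \<epsilon>: "\<epsilon> > 0"
  shows "AE \<omega> in M. eventually (\<lambda>n.
    \<bar>(\<Sum>j<geom_floor \<alpha> n. trunc_X j \<omega> - trunc_mean j) / real (geom_floor \<alpha> n)\<bar> < \<epsilon>) sequentially"
proof -
  define v where "v j = expectation (\<lambda>\<omega>. (trunc_X j \<omega>)\<^sup>2)" for j
  define B where "B n = {\<omega>\<in>space M. \<epsilon> * real (geom_floor \<alpha> n)
      \<le> \<bar>\<Sum>j<geom_floor \<alpha> n. trunc_X j \<omega> - trunc_mean j\<bar>}" for n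
  have [measurable]: "B n \<in> events" for n unfolding B_def by measurable
  have bound: "(\<Sum>n<N. (\<Sum>j<geom_floor \<alpha> n. v j) / (\<epsilon>\<^sup>2 * (real (geom_floor \<alpha> n))\<^sup>2))
      \<le> 1 / \<epsilon>\<^sup>2 * (4 / (1 - inverse (\<alpha>\<^sup>2)) * (2 * expectation (X 0)))" for N
  proof -
    have "(\<Sum>n<N. (\<Sum>j<geom_floor \<alpha> n. v j) / (\<epsilon>\<^sup>2 * (real (geom_floor \<alpha> n))\<^sup>2))
        = 1 / \<epsilon>\<^sup>2 * (\<Sum>n<N. (\<Sum>j<geom_floor \<alpha> n. v j) / (real (geom_floor \<alpha> n))\<^sup>2)"
      by (subst sum_distrib_left) (simp add: field_simps)
    also have "\<dots> \<le> 1 / \<epsilon>\<^sup>2 * (4 / (1 - inverse (\<alpha>\<^sup>2)) * (2 * expectation (X 0)))"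
      using sum_trunc_second_moments_le
      by (intro mult_left_mono sum_geom_floor_weighted_le[OF \<alpha>]) (simp_all add: v_def)
    finally show ?thesis .
  qed
  have "summable (\<lambda>n. prob (B n))"
  proof (rule summableI_nonneg_bounded)
    show "(\<Sum>n<N. prob (B n)) \<le> 1 / \<epsilon>\<^sup>2 * (4 / (1 - inverse (\<alpha>\<^sup>2)) * (2 * expectation (X 0)))" for N
    proof (rule order_trans[OF sum_mono bound])
      fix n show "prob (B n) \<le> (\<Sum>j<geom_floor \<alpha> n. v j) / (\<epsilon>\<^sup>2 * (real (geom_floor \<alpha> n))\<^sup>2)"
        unfolding B_def v_def using geom_floor_ge_1[OF \<alpha>, of n] \<epsilon>
        by (intro prob_centered_trunc_sum_ge_le) auto
    qed
  qed simp
  then have "AE \<omega> in M. eventually (\<lambda>n. \<omega> \<in> space M - B n) sequentially"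
    by (intro borel_cantelli_AE1) (simp_all add: less_top[symmetric])
  then show ?thesis
  proof (rule AE_mp, intro AE_I2 impI)
    fix \<omega> assume "eventually (\<lambda>n. \<omega> \<in> space M - B n) sequentially" "\<omega> \<in> space M"
    then show "eventually (\<lambda>n.
        \<bar>(\<Sum>j<geom_floor \<alpha> n. trunc_X j \<omega> - trunc_mean j) / real (geom_floor \<alpha> n)\<bar> < \<epsilon>) sequentially"
    proof (elim eventually_mono)
      fix n assume "\<omega> \<in> space M - B n" "\<omega> \<in> space M"
      then show "\<bar>(\<Sum>j<geom_floor \<alpha> n. trunc_X j \<omega> - trunc_mean j) / real (geom_floor \<alpha> n)\<bar> < \<epsilon>"
        using geom_floor_ge_1[OF \<alpha>, of n] by (simp add: B_def not_le abs_divide pos_divide_less_eq)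
    qed
  qed
qed

lemma AE_trunc_average_geom_floor_tendsto:
  assumes \<alpha>: "\<alpha> > 1"
  shows "AE \<omega> in M. (\<lambda>n. (\<Sum>j<geom_floor \<alpha> n. trunc_X j \<omega>) / real (geom_floor \<alpha> n))
           \<longlonglongrightarrow> expectation (X 0)"
proof -
  have "AE \<omega> in M. \<forall>q. eventually (\<lambda>n. \<bar>(\<Sum>j<geom_floor \<alpha> n. trunc_X j \<omega> - trunc_mean j)
      / real (geom_floor \<alpha> n)\<bar> < inverse (real (Suc q))) sequentially"
    by (subst AE_all_countable) (intro allI AE_centered_trunc_average_geom_floor_small[OF \<alpha>]; simp)
  then show ?thesis
  proof (rule AE_mp, intro AE_I2 impI)
    fix \<omega> assume "\<forall>q. eventually (\<lambda>n. \<bar>(\<Sum>j<geom_floor \<alpha> n. trunc_X j \<omega> - trunc_mean j)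
      / real (geom_floor \<alpha> n)\<bar> < inverse (real (Suc q))) sequentially"
    then have centered: "(\<lambda>n. (\<Sum>j<geom_floor \<alpha> n. trunc_X j \<omega> - trunc_mean j) / real (geom_floor \<alpha> n))
        \<longlonglongrightarrow> 0"
      by (intro tendsto_zero_if_eventually_less_inverse_Suc) blast
    have means: "(\<lambda>n. (\<Sum>j<geom_floor \<alpha> n. trunc_mean j) / real (geom_floor \<alpha> n)) \<longlonglongrightarrow> expectation (X 0)"
      using filterlim_compose[OF Cesaro_tendsto[OF trunc_mean_tendsto] filterlim_geom_floor_at_top[OF \<alpha>]]
      by simp
    from tendsto_add[OF centered means] show "(\<lambda>n. (\<Sum>j<geom_floor \<alpha> n. trunc_X j \<omega>) / real (geom_floor \<alpha> n))
        \<longlonglongrightarrow> expectation (X 0)"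
      by (simp add: sum_subtractf diff_divide_distrib)
  qed
qed

lemma AE_trunc_average_tendsto:
  "AE \<omega> in M. (\<lambda>k. (\<Sum>j<k. trunc_X j \<omega>) / real k) \<longlonglongrightarrow> expectation (X 0)"
proof -
  define \<alpha> where "\<alpha> r = 1 + inverse (real (Suc r))" for r
  have \<alpha>: "\<alpha> r > 1" for r unfolding \<alpha>_def by simp
  have "AE \<omega> in M. \<forall>r. (\<lambda>n. (\<Sum>j<geom_floor (\<alpha> r) n. trunc_X j \<omega>) / real (geom_floor (\<alpha> r) n))
      \<longlonglongrightarrow> expectation (X 0)"
    by (subst AE_all_countable) (intro allI AE_trunc_average_geom_floor_tendsto \<alpha>)
  then show ?thesis
  proof (rule AE_mp, intro AE_I2 impI)
    fix \<omega> assume lim: "\<forall>r. (\<lambda>n. (\<Sum>j<geom_floor (\<alpha> r) n. trunc_X j \<omega>) / real (geom_floor (\<alpha> r) n))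
      \<longlonglongrightarrow> expectation (X 0)"
    show "(\<lambda>k. (\<Sum>j<k. trunc_X j \<omega>) / real k) \<longlonglongrightarrow> expectation (X 0)"
    proof (rule mono_averages_tendsto_if_geom_floor_averages_tendsto[OF _ _ \<alpha>])
      show "mono (\<lambda>k. \<Sum>j<k. trunc_X j \<omega>)"
        by (intro monoI sum_mono2) (auto simp: trunc_X_bounds)
      show "\<alpha> \<longlonglongrightarrow> 1" unfolding \<alpha>_def using LIMSEQ_inverse_real_of_nat_add[of 1] by simp
    qed (use lim trunc_X_bounds in \<open>auto intro: sum_nonneg\<close>)
  qed
qed

theorem strong_law_nonneg:
  "AE \<omega> in M. (\<lambda>k. (\<Sum>j<k. X j \<omega>) / real k) \<longlonglongrightarrow> expectation (X 0)"
  using AE_trunc_average_tendsto AE_eventually_abs_le_Suc AE_space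
proof eventually_elim
  case (elim \<omega>)
  from elim(2) have "eventually (\<lambda>j. trunc_X j \<omega> = X j \<omega>) sequentially"
    by (rule eventually_mono) (use nonneg_X[OF elim(3)] in \<open>simp add: trunc_X_def truncation_def\<close>)
  with elim show ?case by (blast intro: averages_tendsto_eventually_eq)
qed

end

theorem (in iid_real) strong_law:
  "AE \<omega> in M. (\<lambda>k. (\<Sum>j<k. X j \<omega>) / real k) \<longlonglongrightarrow> expectation (X 0)"
proof -
  interpret pos: nonneg_iid_real M "\<lambda>i \<omega>. max (X i \<omega>) 0"
    using integrable_X0 by (intro nonneg_iid_real.intro iid_real_comp nonneg_iid_real_axioms.intro) auto
  interpret neg: nonneg_iid_real M "\<lambda>i \<omega>. max (- X i \<omega>) 0"
    using integrable_X0 by (intro nonneg_iid_real.intro iid_real_comp nonneg_iid_real_axioms.intro) auto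
  have mean: "expectation (X 0) = expectation (\<lambda>\<omega>. max (X 0 \<omega>) 0) - expectation (\<lambda>\<omega>. max (- X 0 \<omega>) 0)"
  proof -
    have "expectation (X 0) = expectation (\<lambda>\<omega>. max (X 0 \<omega>) 0 - max (- X 0 \<omega>) 0)"
      by (intro Bochner_Integration.integral_cong) auto
    also have "\<dots> = expectation (\<lambda>\<omega>. max (X 0 \<omega>) 0) - expectation (\<lambda>\<omega>. max (- X 0 \<omega>) 0)"
      using integrable_X0 by (intro Bochner_Integration.integral_diff integrable_max) auto
    finally show ?thesis .
  qed
  have parts: "(\<Sum>j<k. max (x j) 0) / real k - (\<Sum>j<k. max (- x j) 0) / real k = (\<Sum>j<k. x j) / real k"
    for x :: "nat \<Rightarrow> real" and k
    unfolding diff_divide_distrib[symmetric] sum_subtractf[symmetric]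
    by (intro arg_cong[where f="\<lambda>s. s / real k"] sum.cong) auto
  from pos.strong_law_nonneg neg.strong_law_nonneg show ?thesis
  proof eventually_elim
    case (elim \<omega>)
    from tendsto_diff[OF elim] show ?case unfolding mean parts .
  qed
qed

lemma (in prob_space) strong_law_shifted:
  fixes Y :: "nat \<Rightarrow> 'a \<Rightarrow> 'b" and f :: "'b \<Rightarrow> real"
  assumes indep: "indep_vars (\<lambda>_. N) Y {1..}"
    and distr: "\<And>i. i \<ge> 1 \<Longrightarrow> distr M N (Y i) = distr M N (Y 1)"
    and f: "f \<in> N \<rightarrow>\<^sub>M borel" and int: "integrable M (\<lambda>\<omega>. f (Y 1 \<omega>))"
  shows "AE \<omega> in M. (\<lambda>m. (\<Sum>i<m. f (Y (Suc i) \<omega>)) / real m) \<longlonglongrightarrow> expectation (\<lambda>\<omega>. f (Y 1 \<omega>))"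
proof -
  have Y: "Y i \<in> M \<rightarrow>\<^sub>M N" if "i \<ge> 1" for i using indep that unfolding indep_vars_def by auto
  have "iid_real M (\<lambda>i \<omega>. f (Y (Suc i) \<omega>))"
  proof
    have "range Suc = {1::nat..}" by (simp add: atLeast_Suc_greaterThan flip: greaterThan_0)
    then have "indep_vars (\<lambda>_. borel) (\<lambda>i \<omega>. f (Y i \<omega>)) (range Suc)"
      using indep_vars_compose2[OF indep, of "\<lambda>_. f" "\<lambda>_. borel"] f by simp
    from indep_vars_reindex[OF this] show "indep_vars (\<lambda>_. borel) (\<lambda>i \<omega>. f (Y (Suc i) \<omega>)) UNIV"
      by simp
    show "distr M borel (\<lambda>\<omega>. f (Y (Suc i) \<omega>)) = distr M borel (\<lambda>\<omega>. f (Y (Suc 0) \<omega>))" for i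
      using distr_comp_eq[OF distr Y Y f, of "Suc i"] by simp
  qed (use int in simp)
  from iid_real.strong_law[OF this] show ?thesis by simp
qed

section \<open>The phase-selecting estimator\<close>

lemma rv_events_comp_subset:
  assumes "X \<in> M \<rightarrow>\<^sub>M N" "f \<in> N \<rightarrow>\<^sub>M L"
  shows "rv_events M L (\<lambda>\<omega>. f (X \<omega>)) \<subseteq> rv_events M N X"
proof
  fix S assume "S \<in> rv_events M L (\<lambda>\<omega>. f (X \<omega>))"
  then obtain A where A: "A \<in> sets L" "S = (\<lambda>\<omega>. f (X \<omega>)) -` A \<inter> space M"
    unfolding rv_events_def by auto
  then have "f -` A \<inter> space N \<in> sets N" "S = X -` (f -` A \<inter> space N) \<inter> space M"
    using assms by (auto dest: measurable_space)
  then show "S \<in> rv_events M N X" unfolding rv_events_def by blast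
qed

lemma (in prob_space) indep_var_if_indep_sets_rv_events:
  assumes indep: "indep_sets E I" and ij: "i \<in> I" "j \<in> I" "i \<noteq> j"
    and X: "random_variable N X" "rv_events M N X \<subseteq> E i"
    and Y: "random_variable N Y" "rv_events M N Y \<subseteq> E j"
  shows "indep_var N X N Y"
proof -
  have "range (case_bool i j) = {i, j}" by (simp add: UNIV_bool insert_commute)
  with ij have "indep_sets E (range (case_bool i j))" by (intro indep_sets_mono_index[OF _ indep]) simp
  moreover have "inj (case_bool i j)"
  proof (rule injI)
    fix a b :: bool assume "case_bool i j a = case_bool i j b"
    with ij(3) show "a = b" by (cases a; cases b) simp_all
  qed
  ultimately have "indep_sets (\<lambda>b. E (case_bool i j b)) UNIV"
    by (rule indep_sets_reindex)
  then have "indep_sets (\<lambda>b. rv_events M N (case_bool X Y b)) UNIV"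
    by (rule indep_sets_mono_sets) (use X Y in \<open>auto split: bool.split\<close>)
  moreover have "case_bool N N = (\<lambda>_. N)" by (rule ext) (simp split: bool.split)
  ultimately show ?thesis
    unfolding indep_var_def indep_vars_def2 rv_events_def using X Y by (simp split: bool.split)
qed

lemma distr_uminus_uniform_measure_symmetric:
  "distr (uniform_measure lborel {-a..a}) borel uminus = uniform_measure lborel {-a..a :: real}"
  (is "distr ?U borel uminus = ?U")
proof (rule measure_eqI)
  show "sets (distr ?U borel uminus) = sets ?U" by simp
  fix A assume "A \<in> sets (distr ?U borel uminus)"
  then have A: "A \<in> sets borel" by simp
  have um: "uminus \<in> ?U \<rightarrow>\<^sub>M (borel :: real measure)"
    by (subst measurable_cong_sets[where M'=borel and N'=borel]) auto
  have lborel_uminus: "emeasure lborel (uminus -` B) = emeasure lborel B" if "B \<in> sets borel" for B :: "real set"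
    using emeasure_distr[of uminus lborel borel B] that by (simp add: lborel_distr_uminus)
  have "emeasure (distr ?U borel uminus) A = emeasure ?U (uminus -` A)"
    using emeasure_distr[OF um A] by simp
  also have "\<dots> = emeasure lborel (uminus -` ({-a..a} \<inter> A)) / emeasure lborel {-a..a}"
    using A measurable_sets[OF um A]
    by (subst emeasure_uniform_measure) (auto intro!: arg_cong2[where f="(/)"] arg_cong[where f="emeasure lborel"])
  also have "\<dots> = emeasure ?U A"
    using A by (subst lborel_uminus) (auto simp: emeasure_uniform_measure)
  finally show "emeasure (distr ?U borel uminus) A = emeasure ?U A" .
qed

context prob_space
begin

lemma distr_uminus_eq_if_uniform_symmetric:
  fixes X :: "'a \<Rightarrow> real"
  assumes "X \<in> borel_measurable M" "distr M borel X = uniform_measure lborel {-a..a}"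
  shows "distr M borel (\<lambda>\<omega>. - X \<omega>) = distr M borel X"
proof -
  have "distr M borel (\<lambda>\<omega>. - X \<omega>) = distr (distr M borel X) borel uminus"
    using distr_distr[of uminus borel borel X M] assms(1) by (simp add: comp_def)
  also have "\<dots> = distr M borel X"
    unfolding assms(2) by (rule distr_uminus_uniform_measure_symmetric)
  finally show ?thesis .
qed

lemma integral_odd_eq_0:
  fixes h :: "real \<Rightarrow> real"
  assumes X: "X \<in> borel_measurable M" and sym: "distr M borel (\<lambda>\<omega>. - X \<omega>) = distr M borel X"
    and h: "h \<in> borel_measurable borel" "\<And>x. h (- x) = - h x"
  shows "(\<integral>\<omega>. h (X \<omega>) \<partial>M) = 0"
proof -
  have "(\<integral>\<omega>. h (X \<omega>) \<partial>M) = integral\<^sup>L (distr M borel (\<lambda>\<omega>. - X \<omega>)) h"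
    using X h by (simp add: sym integral_distr)
  also have "\<dots> = - (\<integral>\<omega>. h (X \<omega>) \<partial>M)"
    using X h by (simp add: integral_distr)
  finally show ?thesis by simp
qed

lemma expectation_indicator_half_uniform:
  fixes X :: "'a \<Rightarrow> real"
  assumes X: "X \<in> borel_measurable M" "distr M borel X = uniform_measure lborel {-a..a}" and a: "a > 0"
  shows "(\<integral>\<omega>. indicator {-a/2..a/2} (X \<omega>) \<partial>M) = (1 / 2 :: real)"
proof -
  have "(\<integral>\<omega>. indicator {-a/2..a/2} (X \<omega>) \<partial>M) = (integral\<^sup>L (distr M borel X) (indicator {-a/2..a/2}) :: real)"
    using X by (subst integral_distr) auto
  also have "\<dots> = measure (uniform_measure lborel {-a..a}) {-a/2..a/2}"
    unfolding X(2) by simp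
  also have "\<dots> = measure lborel ({-a..a} \<inter> {-a/2..a/2}) / measure lborel {-a..a}"
    using a by (intro measure_uniform_measure) auto
  also have "{-a..a} \<inter> {-a/2..a/2} = {-a/2..a/2}" using a by auto
  finally show ?thesis using a by (simp add: measure_lborel_Icc)
qed

end

definition selected_output :: "real \<Rightarrow> real \<Rightarrow> real \<Rightarrow> real \<Rightarrow> real \<times> real \<times> (real \<Rightarrow> real) \<Rightarrow> real" where
  "selected_output G w0 \<theta> t =
     (\<lambda>(f, p, \<nu>). indicator {-pi/2..pi/2} p * (G * f * sin (w0 * t + p + \<theta>) + \<nu> t))"

lemma measurable_selected_output[measurable]:
  "selected_output G w0 \<theta> t \<in> triple_space \<rightarrow>\<^sub>M borel"
  unfolding selected_output_def case_prod_beta by measurable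

lemma (in prob_space) indep_var_integral_bounded_comp_mult:
  fixes X Y :: "'a \<Rightarrow> real" and g :: "real \<Rightarrow> real"
  assumes indep: "indep_var borel Y borel X" and X: "integrable M X"
    and g: "g \<in> borel_measurable borel" "\<And>y. \<bar>g y\<bar> \<le> 1"
  shows "integrable M (\<lambda>\<omega>. g (Y \<omega>) * X \<omega>)"
    and "(\<integral>\<omega>. g (Y \<omega>) * X \<omega> \<partial>M) = (\<integral>\<omega>. g (Y \<omega>) \<partial>M) * expectation X"
proof -
  from indep_var_rv1[OF indep] g have int_g: "integrable M (\<lambda>\<omega>. g (Y \<omega>))"
    by (intro integrable_const_bound[where B=1]) auto
  have "indep_var borel (\<lambda>\<omega>. g (Y \<omega>)) borel X"
    using indep_var_compose[OF indep g(1), of id borel] by (simp add: comp_def)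
  from indep_var_integrable[OF this int_g X] indep_var_lebesgue_integral[OF this int_g X]
  show "integrable M (\<lambda>\<omega>. g (Y \<omega>) * X \<omega>)"
    "(\<integral>\<omega>. g (Y \<omega>) * X \<omega> \<partial>M) = (\<integral>\<omega>. g (Y \<omega>) \<partial>M) * expectation X" .
qed

lemma (in prob_space) expectation_selected_output:
  fixes F \<phi> :: "'a \<Rightarrow> real" and \<nu> :: "'a \<Rightarrow> real \<Rightarrow> real"
  assumes F: "integrable M F" and \<phi>: "\<phi> \<in> borel_measurable M" and \<nu>: "\<nu> \<in> M \<rightarrow>\<^sub>M path_space"
    and indep: "indep_sets (\<lambda>j::nat. if j = 0 then rv_events M borel F
                  else if j = 1 then rv_events M borel \<phi> else rv_events M path_space \<nu>) {0, 1, 2}"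
    and \<nu>_int: "integrable M (\<lambda>\<omega>. \<nu> \<omega> t)" and \<nu>_mean: "expectation (\<lambda>\<omega>. \<nu> \<omega> t) = 0"
    and sym: "distr M borel (\<lambda>\<omega>. - \<phi> \<omega>) = distr M borel \<phi>"
  shows "integrable M (\<lambda>\<omega>. selected_output G w0 \<theta> t (F \<omega>, \<phi> \<omega>, \<nu> \<omega>))"
    and "expectation (\<lambda>\<omega>. selected_output G w0 \<theta> t (F \<omega>, \<phi> \<omega>, \<nu> \<omega>))
       = expectation F * expectation (\<lambda>\<omega>. indicator {-pi/2..pi/2} (\<phi> \<omega>) * cos (\<phi> \<omega>)) * sig_in G w0 \<theta> t"
proof -
  define s :: "real \<Rightarrow> real" where "s = indicator {-pi/2..pi/2}"
  define a where "a = w0 * t + \<theta>"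
  have \<phi>_F: "indep_var borel \<phi> borel F"
    using F \<phi> by (intro indep_var_if_indep_sets_rv_events[OF indep, of 1 0]) auto
  have \<phi>_\<nu>: "indep_var borel \<phi> borel (\<lambda>\<omega>. \<nu> \<omega> t)"
    using \<phi> \<nu> rv_events_comp_subset[OF \<nu> measurable_component_singleton[of t UNIV "\<lambda>_. borel"]]
    by (intro indep_var_if_indep_sets_rv_events[OF indep, of 1 2]) auto
  have s_sin: "(\<lambda>x. s x * sin (a + x)) \<in> borel_measurable borel" "\<bar>s x * sin (a + x)\<bar> \<le> 1" for x
    by (auto simp: s_def indicator_def abs_sin_le_one)
  have s: "s \<in> borel_measurable borel" "\<bar>s x\<bar> \<le> 1" for x
    by (auto simp: s_def indicator_def)
  note signal = indep_var_integral_bounded_comp_mult[OF \<phi>_F F s_sin]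
  note noise = indep_var_integral_bounded_comp_mult[OF \<phi>_\<nu> \<nu>_int s]
  have split: "selected_output G w0 \<theta> t (F \<omega>, \<phi> \<omega>, \<nu> \<omega>)
      = G * (s (\<phi> \<omega>) * sin (a + \<phi> \<omega>) * F \<omega>) + s (\<phi> \<omega>) * \<nu> \<omega> t" for \<omega>
    by (simp add: selected_output_def s_def a_def algebra_simps)
  show "integrable M (\<lambda>\<omega>. selected_output G w0 \<theta> t (F \<omega>, \<phi> \<omega>, \<nu> \<omega>))"
    unfolding split using signal(1) noise(1) by simp
  have int_s: "integrable M (\<lambda>\<omega>. g (\<phi> \<omega>))" if "g \<in> borel_measurable borel" "\<And>x. \<bar>g x\<bar> \<le> 1"
    for g :: "real \<Rightarrow> real"
    using that \<phi> by (intro integrable_const_bound[where B=1]) auto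
  have "s (- x) * sin (- x) = - (s x * sin x)" for x by (auto simp: s_def indicator_def)
  then have odd: "(\<integral>\<omega>. s (\<phi> \<omega>) * sin (\<phi> \<omega>) \<partial>M) = 0"
    by (intro integral_odd_eq_0[OF \<phi> sym]) (auto simp: s_def)
  have "(\<integral>\<omega>. s (\<phi> \<omega>) * sin (a + \<phi> \<omega>) \<partial>M)
      = sin a * (\<integral>\<omega>. s (\<phi> \<omega>) * cos (\<phi> \<omega>) \<partial>M) + cos a * (\<integral>\<omega>. s (\<phi> \<omega>) * sin (\<phi> \<omega>) \<partial>M)"
    using int_s[of "\<lambda>x. s x * cos x"] int_s[of "\<lambda>x. s x * sin x"]
    by (simp add: sin_add algebra_simps s_def indicator_def abs_sin_le_one abs_cos_le_one)
  then show "expectation (\<lambda>\<omega>. selected_output G w0 \<theta> t (F \<omega>, \<phi> \<omega>, \<nu> \<omega>))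
       = expectation F * expectation (\<lambda>\<omega>. indicator {-pi/2..pi/2} (\<phi> \<omega>) * cos (\<phi> \<omega>)) * sig_in G w0 \<theta> t"
    unfolding split using signal noise \<nu>_mean odd by (simp add: s_def a_def sig_in_def)
qed

lemma sum_Xplus_eq:
  fixes h :: "nat \<Rightarrow> real"
  shows "(\<Sum>i\<in>Xplus \<phi> m \<omega>. h i) = (\<Sum>i<m. indicator {-pi/2..pi/2} (\<phi> (Suc i) \<omega>) * h (Suc i))"
proof -
  have "(\<Sum>i\<in>Xplus \<phi> m \<omega>. h i) = (\<Sum>i\<in>{Suc 0..m}. indicator {-pi/2..pi/2} (\<phi> i \<omega>) * h i)"
  proof -
    have "Xplus \<phi> m \<omega> = {i \<in> {Suc 0..m}. \<phi> i \<omega> \<in> {-pi/2..pi/2}}"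
      by (auto simp: Xplus_def abs_le_iff)
    then show ?thesis by (simp add: sum.inter_filter split: split_indicator)
  qed
  then show ?thesis by (simp only: sum.atLeast1_atMost_eq)
qed

lemma (in prob_space) AE_selected_fraction_tendsto:
  assumes Y: "indep_vars (\<lambda>_. triple_space) Y {1..}"
      "\<And>i. i \<ge> 1 \<Longrightarrow> distr M triple_space (Y i) = distr M triple_space (Y 1)"
    and uniform: "distr M borel (\<lambda>\<omega>. fst (snd (Y 1 \<omega>))) = uniform_measure lborel {-pi..pi}"
  shows "AE \<omega> in M. (\<lambda>m. (\<Sum>i<m. indicator {-pi/2..pi/2} (fst (snd (Y (Suc i) \<omega>)))) / real m)
           \<longlonglongrightarrow> 1 / 2"
proof -
  have [measurable]: "Y 1 \<in> M \<rightarrow>\<^sub>M triple_space" using Y(1) unfolding indep_vars_def by auto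
  have selector: "(\<lambda>y. indicator {-pi/2..pi/2} (fst (snd y)) :: real) \<in> triple_space \<rightarrow>\<^sub>M borel"
    by measurable
  have phase: "(\<lambda>\<omega>. fst (snd (Y 1 \<omega>))) \<in> borel_measurable M" by measurable
  then have "integrable M (\<lambda>\<omega>. indicator {-pi/2..pi/2} (fst (snd (Y 1 \<omega>))) :: real)"
    by (intro integrable_const_bound[where B=1]) auto
  from strong_law_shifted[OF Y selector this] show ?thesis
    unfolding expectation_indicator_half_uniform[OF phase uniform pi_gt_zero] by simp
qed

lemma card_Xplus_eq: "real (card (Xplus \<phi> m \<omega>)) = (\<Sum>i<m. indicator {-pi/2..pi/2} (\<phi> (Suc i) \<omega>))"
  unfolding real_of_card sum_Xplus_eq by simp

lemma ratio_of_averages_tendsto: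
  fixes A B :: "nat \<Rightarrow> real"
  assumes A: "(\<lambda>m. A m / real m) \<longlonglongrightarrow> a" "a > 0" and B: "(\<lambda>m. B m / real m) \<longlonglongrightarrow> b"
  shows "(\<lambda>m. B m / A m) \<longlonglongrightarrow> b / a" and "filterlim A at_top sequentially"
proof -
  have "(\<lambda>m. (B m / real m) / (A m / real m)) \<longlonglongrightarrow> b / a"
    by (rule tendsto_divide[OF B A(1)]) (use A(2) in simp)
  moreover have "eventually (\<lambda>m. (B m / real m) / (A m / real m) = B m / A m) sequentially"
    by (rule eventually_sequentiallyI[of 1]) simp
  ultimately show "(\<lambda>m. B m / A m) \<longlonglongrightarrow> b / a" by (rule Lim_transform_eventually)
  have "filterlim (\<lambda>m. A m / real m * real m) at_top sequentially"
    by (rule filterlim_tendsto_pos_mult_at_top[OF A filterlim_real_sequentially])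
  moreover have "eventually (\<lambda>m. A m / real m * real m = A m) sequentially"
    by (rule eventually_sequentiallyI[of 1]) simp
  ultimately show "filterlim A at_top sequentially"
    using filterlim_cong[OF refl refl, of "\<lambda>m. A m / real m * real m" A] by simp
qed

theorem lemma1:
  fixes M :: "'a measure"
    and G w0 \<theta> :: real
    and F \<phi> :: "nat \<Rightarrow> 'a \<Rightarrow> real"
    and n :: "nat \<Rightarrow> 'a \<Rightarrow> real \<Rightarrow> real"
  assumes "prob_space M"
    and "G > 0" and "w0 > 0"
    and F_meas: "\<And>i. i \<ge> 1 \<Longrightarrow> F i \<in> borel_measurable M"
    and phi_meas: "\<And>i. i \<ge> 1 \<Longrightarrow> \<phi> i \<in> borel_measurable M"
    and n_meas: "\<And>i. i \<ge> 1 \<Longrightarrow> n i \<in> measurable M path_space"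
    and iid_indep: "prob_space.indep_vars M (\<lambda>_. triple_space)
                      (\<lambda>i \<omega>. (F i \<omega>, \<phi> i \<omega>, n i \<omega>)) {1..}"
    and iid_dist: "\<And>i. i \<ge> 1 \<Longrightarrow>
                      distr M triple_space (\<lambda>\<omega>. (F i \<omega>, \<phi> i \<omega>, n i \<omega>))
                    = distr M triple_space (\<lambda>\<omega>. (F 1 \<omega>, \<phi> 1 \<omega>, n 1 \<omega>))"
    and indep_within: "\<And>i. i \<ge> 1 \<Longrightarrow>
                      prob_space.indep_sets M
                        (\<lambda>j::nat. if j = 0 then rv_events M borel (F i)
                                 else if j = 1 then rv_events M borel (\<phi> i)
                                 else rv_events M path_space (n i)) {0, 1, 2}"
    and F_int: "\<And>i. i \<ge> 1 \<Longrightarrow> integrable M (F i)"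
    and phi_unif: "\<And>i. i \<ge> 1 \<Longrightarrow> distr M borel (\<phi> i) = uniform_measure lborel {-pi..pi}"
    and n_int: "\<And>i t. i \<ge> 1 \<Longrightarrow> integrable M (\<lambda>\<omega>. n i \<omega> t)"
    and n_mean: "\<And>i t. i \<ge> 1 \<Longrightarrow> (\<integral>\<omega>. n i \<omega> t \<partial>M) = 0"
  shows "\<exists>c::real. \<forall>t::real.
           AE \<omega> in M. (\<lambda>m. g_hat G w0 \<theta> F \<phi> n m t \<omega>) \<longlonglongrightarrow> c * sig_in G w0 \<theta> t
             \<and> filterlim (\<lambda>m. card (Xplus \<phi> m \<omega>)) at_top sequentially"
proof -
  interpret prob_space M by fact
  define Y where "Y = (\<lambda>i \<omega>. (F i \<omega>, \<phi> i \<omega>, n i \<omega>))"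
  define \<kappa> where "\<kappa> = expectation (\<lambda>\<omega>. indicator {-pi/2..pi/2} (\<phi> 1 \<omega>) * cos (\<phi> 1 \<omega>))"
  have Y: "indep_vars (\<lambda>_. triple_space) Y {1..}"
    "\<And>i. i \<ge> 1 \<Longrightarrow> distr M triple_space (Y i) = distr M triple_space (Y 1)"
    unfolding Y_def by (fact iid_indep, fact iid_dist)
  have sym: "distr M borel (\<lambda>\<omega>. - \<phi> 1 \<omega>) = distr M borel (\<phi> 1)"
    using phi_meas phi_unif by (intro distr_uminus_eq_if_uniform_symmetric) auto
  have selected_fraction:
    "AE \<omega> in M. (\<lambda>m. (\<Sum>i<m. indicator {-pi/2..pi/2} (\<phi> (Suc i) \<omega>)) / real m) \<longlonglongrightarrow> 1 / 2"
    using AE_selected_fraction_tendsto[OF Y] phi_unif[of 1] by (simp add: Y_def)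
  have selected_average: "AE \<omega> in M. (\<lambda>m. (\<Sum>i<m. selected_output G w0 \<theta> t (Y (Suc i) \<omega>)) / real m)
      \<longlonglongrightarrow> expectation (F 1) * \<kappa> * sig_in G w0 \<theta> t" for t
    using strong_law_shifted[OF Y measurable_selected_output]
      expectation_selected_output[OF F_int phi_meas n_meas indep_within n_int n_mean sym]
    by (simp add: Y_def \<kappa>_def)
  show ?thesis
  proof (intro exI allI)
    fix t
    from selected_fraction selected_average[of t]
    show "AE \<omega> in M. (\<lambda>m. g_hat G w0 \<theta> F \<phi> n m t \<omega>) \<longlonglongrightarrow> (2 * expectation (F 1) * \<kappa>) * sig_in G w0 \<theta> t
             \<and> filterlim (\<lambda>m. card (Xplus \<phi> m \<omega>)) at_top sequentially"
    proof eventually_elim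
      case (elim \<omega>)
      have "selected_output G w0 \<theta> t (Y i \<omega>) = indicator {-pi/2..pi/2} (\<phi> i \<omega>) * chan_out G w0 \<theta> F \<phi> n i t \<omega>"
        for i by (simp add: Y_def selected_output_def chan_out_def)
      with ratio_of_averages_tendsto[OF elim(1) _ elim(2)] show ?case
        unfolding g_hat_def sum_Xplus_eq card_Xplus_eq filterlim_sequentially_iff_filterlim_real
        by (simp add: ac_simps)
    qed
  qed
qed

end
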